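(* Let $k\in\mathbb{Z}$, let $n$ be a positive integer and let $m$ be an odd positive integer. Then $$E_{n-1}^{(k)}(x)=\sum_{l=0}^{n-1}\binom{n-1}{l}m^{l}\sum_{j=1}^{n-l}\sum_{s=0}^{m-1}(-1)^sE_{l}\Big(\frac{s+x}{m}\Big)\frac{1}{j^{k-1}}\frac{S_{1}(n-l,j)}{n-l}.$$
   Context: Euler polynomials $E_n(x)$ are defined by $\frac{2}{e^t+1}e^{xt}=\sum_{n=0}^{\infty}E_n(x)\frac{t^n}{n!}$. For $k\in\mathbb{Z}$, $\mathrm{Ei}_k(x)=\sum_{n=1}^{\infty}\frac{x^n}{n^k(n-1)!}$; the poly-Genocchi polynomials $G_n^{(k)}(x)$ are defined by $\frac{2\,\mathrm{Ei}_k(\log(1+t))}{e^t+1}e^{xt}=\sum_{n=0}^{\infty}G_n^{(k)}(x)\frac{t^n}{n!}$, and the poly-Euler polynomials are $E_n^{(k)}(x)=\frac{G_{n+1}^{(k)}(x)}{n+1}$ ($n\ge0$). $S_1(n,m)$ are the signed Stirling numbers of the first kind: $\frac{(\log(1+t))^m}{m!}=\sum_{n=m}^{\infty}S_1(n,m)\frac{t^n}{n!}$. *)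

theory Defs
  imports Complex_Main "HOL-Computational_Algebra.Formal_Power_Series" "HOL-Combinatorics.Stirling"
begin

definition euler_poly :: "nat \<Rightarrow> real \<Rightarrow> real" where
  "euler_poly n x = fact n * fps_nth (fps_const 2 * fps_exp x / (fps_exp 1 + 1)) n"

definition Ei_fps :: "int \<Rightarrow> real fps" where
  "Ei_fps k = Abs_fps (\<lambda>n. if n = 0 then 0 else 1 / ((real n powi k) * fact (n - 1)))"

text \<open>fps_ln 1 is the formal power series of log(1+t).\<close>
definition poly_genocchi :: "int \<Rightarrow> nat \<Rightarrow> real \<Rightarrow> real" where
  "poly_genocchi k n x =
     fact n * fps_nth (fps_const 2 * (Ei_fps k oo fps_ln 1) * fps_exp x / (fps_exp 1 + 1)) n"

definition poly_euler :: "int \<Rightarrow> nat \<Rightarrow> real \<Rightarrow> real" where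
  "poly_euler k n x = poly_genocchi k (n + 1) x / real (n + 1)"

definition S1 :: "nat \<Rightarrow> nat \<Rightarrow> real" where
  "S1 n m = (-1) ^ (n - m) * real (stirling n m)"

end

(* Since (log(1+t))^j / j! generates the Stirling
   numbers S1(N, j), the coefficient of t^N / N! in Ei_k(log(1+t)) is the sum over j of
   S1(N, j) / j^(k-1); hence G_n^(k)(x) is the binomial convolution of these numbers with E_l(x),
   and dividing by n turns binom(n, l) into binom(n-1, l) / (n-l). For odd m the factorisation
   e^(mt) + 1 = (e^t + 1) * sum_{s<m} (-e^t)^s gives the multiplication formula
   E_l(x) = m^l * sum_{s<m} (-1)^s E_l((s+x)/m), which is substituted into the convolution. *)
theory Submission
  imports Defs
begin

unbundle fps_syntax

lemma S1_0_left: "S1 0 j = (if j = 0 then 1 else 0)"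
  by (cases j) (auto simp: S1_def)

lemma S1_Suc_0: "S1 (Suc N) 0 = 0"
  by (simp add: S1_def)

lemma S1_Suc_Suc: "S1 (Suc N) (Suc j) = S1 N j - real N * S1 N (Suc j)"
proof (cases "j < N")
  case True
  then obtain d where "N - j = Suc d" "N - Suc j = d"
    by (metis Suc_diff_Suc diff_Suc_1)
  then show ?thesis
    by (simp add: S1_def algebra_simps)
next
  case False
  then show ?thesis
    by (cases "j = N") (auto simp: S1_def)
qed

lemma fps_ln_power_deriv:
  "(1 + fps_X) * fps_deriv (fps_ln (1::real) ^ Suc j) = fps_const (real (Suc j)) * fps_ln 1 ^ j"
proof -
  have "(1 + fps_X) * inverse (1 + fps_X :: real fps) = 1"
    by (simp add: inverse_mult_eq_1')
  then show ?thesis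
    unfolding fps_deriv_power fps_ln_deriv
    by (simp only: mult_ac) simp
qed

lemma fps_ln_power_nth_rec:
  "real (Suc N) * (fps_ln 1 ^ Suc j) $ Suc N
     = real (Suc j) * (fps_ln (1::real) ^ j) $ N - real N * (fps_ln 1 ^ Suc j) $ N"
proof -
  define g where "g = fps_ln (1::real) ^ Suc j"
  have "((1 + fps_X) * fps_deriv g) $ N = real (Suc j) * (fps_ln 1 ^ j) $ N"
    unfolding g_def fps_ln_power_deriv by simp
  moreover have "((1 + fps_X) * fps_deriv g) $ N = real (Suc N) * g $ Suc N + real N * g $ N"
    by (cases N) (simp_all add: distrib_right fps_X_mult_nth)
  ultimately show ?thesis
    unfolding g_def by simp
qed

lemma fact_mult_fps_ln_power_nth: "fact N * (fps_ln (1::real) ^ j) $ N = fact j * S1 N j"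
proof (induction N arbitrary: j)
  case 0
  then show ?case
    by (simp add: S1_0_left fps_nth_power_0)
next
  case (Suc N)
  show ?case
  proof (cases j)
    case 0
    then show ?thesis
      by (simp add: S1_Suc_0)
  next
    case (Suc i)
    have "fact (Suc N) * (fps_ln 1 ^ Suc i) $ Suc N
        = fact N * (real (Suc N) * (fps_ln 1 ^ Suc i) $ Suc N)"
      by simp
    also have "\<dots> = real (Suc i) * (fact N * (fps_ln 1 ^ i) $ N)
        - real N * (fact N * (fps_ln 1 ^ Suc i) $ N)"
      unfolding fps_ln_power_nth_rec by (simp add: algebra_simps del: power_Suc)
    also have "\<dots> = fact (Suc i) * S1 (Suc N) (Suc i)"
      unfolding Suc.IH S1_Suc_Suc by (simp add: algebra_simps)
    finally show ?thesis
      unfolding Suc .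
  qed
qed

definition euler_fps :: "real \<Rightarrow> real fps" where
  "euler_fps y = fps_const 2 * fps_exp y / (fps_exp 1 + 1)"

lemma euler_poly_conv_euler_fps: "euler_poly n x = fact n * euler_fps x $ n"
  by (simp add: euler_poly_def euler_fps_def)

lemma euler_fps_times_denom: "euler_fps y * (fps_exp 1 + 1) = fps_const 2 * fps_exp y"
  unfolding euler_fps_def by (rule unit_div_mult_self) simp

lemma euler_fps_compose_linear:
  "(euler_fps y oo (fps_const c * fps_X)) * (fps_exp c + 1) = fps_const 2 * fps_exp (c * y)"
proof -
  have "(euler_fps y * (fps_exp 1 + 1)) oo (fps_const c * fps_X)
      = (euler_fps y oo (fps_const c * fps_X)) * (fps_exp c + 1)"
    by (simp add: fps_compose_mult_distrib fps_compose_add_distrib)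
  then show ?thesis
    unfolding euler_fps_times_denom by (simp add: fps_compose_mult_distrib)
qed

lemma alternating_geometric_sum:
  fixes q :: "'a :: comm_ring_1"
  assumes "odd m"
  shows "(\<Sum>s<m. (-q) ^ s) * (q + 1) = q ^ m + 1"
proof -
  have "(-q) ^ m - 1 = (-q - 1) * (\<Sum>s<m. (-q) ^ s)"
    by (rule power_diff_1_eq)
  then show ?thesis
    using assms by (simp add: power_minus_odd algebra_simps)
qed

lemma euler_fps_multiplication:
  assumes "odd m"
  shows "(\<Sum>s<m. fps_const ((-1) ^ s) *
            (euler_fps ((real s + x) / real m) oo (fps_const (real m) * fps_X))) = euler_fps x"
    (is "?F = _")
proof -
  define q where "q = fps_exp (1::real)"
  have "m > 0"
    using assms odd_pos by blast
  have "?F * (q ^ m + 1) = (\<Sum>s<m. fps_const ((-1) ^ s) *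
      ((euler_fps ((real s + x) / real m) oo (fps_const (real m) * fps_X)) * (fps_exp (real m) + 1)))"
    unfolding q_def fps_exp_power_mult sum_distrib_right by (simp add: mult.assoc)
  also have "\<dots> = (\<Sum>s<m. fps_const 2 * fps_exp x * (-q) ^ s)"
  proof (rule sum.cong[OF refl])
    fix s
    have "real m * ((real s + x) / real m) = real s + x"
      using \<open>m > 0\<close> by simp
    then have "(euler_fps ((real s + x) / real m) oo (fps_const (real m) * fps_X))
        * (fps_exp (real m) + 1) = fps_const 2 * fps_exp x * q ^ s"
      unfolding euler_fps_compose_linear q_def by (simp add: fps_exp_add_mult fps_exp_power_mult)
    moreover have "fps_const ((-1) ^ s) * q ^ s = (-q) ^ s"
      by (metis power_minus fps_const_neg fps_const_1_eq_1 fps_const_power)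
    ultimately show "fps_const ((-1) ^ s) * ((euler_fps ((real s + x) / real m)
        oo (fps_const (real m) * fps_X)) * (fps_exp (real m) + 1)) = fps_const 2 * fps_exp x * (-q) ^ s"
      by (metis mult.left_commute)
  qed
  also have "\<dots> = euler_fps x * (q + 1) * (\<Sum>s<m. (-q) ^ s)"
    unfolding q_def euler_fps_times_denom sum_distrib_left ..
  also have "\<dots> = euler_fps x * (q ^ m + 1)"
    using alternating_geometric_sum[OF assms, of q] by (metis mult.assoc mult.commute)
  finally have "?F * (q ^ m + 1) = euler_fps x * (q ^ m + 1)" .
  moreover have "q ^ m + 1 \<noteq> 0"
  proof
    assume "q ^ m + 1 = 0"
    then have "(q ^ m + 1) $ 0 = 0"
      by simp
    then show False
      unfolding q_def by (simp add: fps_nth_power_0)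
  qed
  ultimately show ?thesis
    using mult_right_cancel by blast
qed

lemma euler_poly_multiplication:
  assumes "odd m"
  shows "euler_poly l x = real m ^ l * (\<Sum>s = 0..m - 1. (-1) ^ s * euler_poly l ((real s + x) / real m))"
proof -
  have "{0..m - 1} = {..<m}"
    using assms odd_pos by fastforce
  then show ?thesis
    unfolding euler_poly_conv_euler_fps
    by (subst euler_fps_multiplication[OF assms, symmetric, of x])
       (simp add: fps_sum_nth sum_distrib_left, simp add: mult_ac)
qed

definition Ei_ln_coeff :: "int \<Rightarrow> nat \<Rightarrow> real" where
  "Ei_ln_coeff k N = (\<Sum>j = 1..N. S1 N j / real j powi (k - 1))"

lemma Ei_fps_nth_times_fact:
  assumes "i > 0"
  shows "Ei_fps k $ i * fact i = 1 / real i powi (k - 1)"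
proof -
  have "real i powi k = real i powi (k - 1) * real i"
    using assms power_int_diff[of "real i" k 1] by simp
  moreover have "fact i = real i * fact (i - 1)"
    using assms fact_reduce[OF assms] by simp
  ultimately show ?thesis
    using assms by (simp add: Ei_fps_def)
qed

lemma fact_mult_Ei_fps_compose_ln_nth: "fact N * (Ei_fps k oo fps_ln 1) $ N = Ei_ln_coeff k N"
proof -
  have "fact N * (Ei_fps k oo fps_ln 1) $ N = (\<Sum>i = 0..N. Ei_fps k $ i * (fact N * (fps_ln 1 ^ i) $ N))"
    unfolding fps_compose_nth sum_distrib_left by (simp add: mult_ac)
  also have "\<dots> = (\<Sum>i = 1..N. Ei_fps k $ i * fact i * S1 N i)"
    by (simp add: fact_mult_fps_ln_power_nth sum.atLeast_Suc_atMost Ei_fps_def mult_ac)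
  also have "\<dots> = Ei_ln_coeff k N"
    unfolding Ei_ln_coeff_def by (rule sum.cong) (simp_all add: Ei_fps_nth_times_fact)
  finally show ?thesis .
qed

lemma poly_genocchi_conv_sum:
  "poly_genocchi k n x = (\<Sum>l = 0..n. real (n choose l) * Ei_ln_coeff k (n - l) * euler_poly l x)"
proof -
  have "fps_const 2 * (Ei_fps k oo fps_ln 1) * fps_exp x / (fps_exp 1 + 1)
      = euler_fps x * (Ei_fps k oo fps_ln 1)"
    unfolding euler_fps_def by (simp add: fps_divide_unit mult_ac)
  then have "poly_genocchi k n x = fact n * (euler_fps x * (Ei_fps k oo fps_ln 1)) $ n"
    unfolding poly_genocchi_def by simp
  also have "\<dots> = (\<Sum>l = 0..n. fact n * (euler_fps x $ l * (Ei_fps k oo fps_ln 1) $ (n - l)))"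
    unfolding fps_mult_nth sum_distrib_left ..
  also have "\<dots> = (\<Sum>l = 0..n. real (n choose l) * Ei_ln_coeff k (n - l) * euler_poly l x)"
  proof (rule sum.cong[OF refl])
    fix l
    assume "l \<in> {0..n}"
    then have "real (fact l * fact (n - l) * (n choose l)) = real (fact n)"
      by (simp only: binomial_fact_lemma atLeastAtMost_iff)
    then have "fact n = real (n choose l) * fact (n - l) * fact l"
      unfolding of_nat_mult of_nat_fact by (simp only: mult_ac)
    then show "fact n * (euler_fps x $ l * (Ei_fps k oo fps_ln 1) $ (n - l))
        = real (n choose l) * Ei_ln_coeff k (n - l) * euler_poly l x"
      unfolding fact_mult_Ei_fps_compose_ln_nth[symmetric] euler_poly_conv_euler_fps
      by (simp add: mult_ac)
  qed
  finally show ?thesis .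
qed

lemma poly_euler_conv_sum:
  "poly_euler k n x =
     (\<Sum>l = 0..n. real (n choose l) * (Ei_ln_coeff k (Suc n - l) / real (Suc n - l)) * euler_poly l x)"
proof -
  have "poly_euler k n x =
      (\<Sum>l = 0..n. real (Suc n choose l) * Ei_ln_coeff k (Suc n - l) * euler_poly l x) / real (Suc n)"
    unfolding poly_euler_def poly_genocchi_conv_sum sum.atLeast0_atMost_Suc
    by (simp add: Ei_ln_coeff_def)
  also have "\<dots> = (\<Sum>l = 0..n. real (n choose l) * (Ei_ln_coeff k (Suc n - l) / real (Suc n - l)) * euler_poly l x)"
    unfolding sum_divide_distrib
  proof (rule sum.cong[OF refl])
    fix l
    assume "l \<in> {0..n}"
    then have "real (Suc n - l) \<noteq> 0"
      by simp
    moreover have "real (Suc n - l) * real (Suc n choose l) = real (Suc n) * real (n choose l)"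
      using binomial_absorb_comp[of "Suc n" l] by (metis diff_Suc_1 of_nat_mult)
    ultimately have binomial_ratio:
      "real (Suc n choose l) / real (Suc n) = real (n choose l) / real (Suc n - l)"
      by (simp add: frac_eq_eq mult.commute)
    have "real (Suc n choose l) * Ei_ln_coeff k (Suc n - l) * euler_poly l x / real (Suc n)
        = real (Suc n choose l) / real (Suc n) * (Ei_ln_coeff k (Suc n - l) * euler_poly l x)"
      by simp
    also have "\<dots> = real (n choose l) * (Ei_ln_coeff k (Suc n - l) / real (Suc n - l)) * euler_poly l x"
      unfolding binomial_ratio by simp
    finally show "real (Suc n choose l) * Ei_ln_coeff k (Suc n - l) * euler_poly l x / real (Suc n)
        = real (n choose l) * (Ei_ln_coeff k (Suc n - l) / real (Suc n - l)) * euler_poly l x" .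
  qed
  finally show ?thesis .
qed

theorem corollary7:
  fixes k :: int and n m :: nat and x :: real
  assumes "n > 0" and "odd m" and "m > 0"
  shows "poly_euler k (n - 1) x =
    (\<Sum>l = 0..n - 1. real (n - 1 choose l) * real m ^ l *
      (\<Sum>j = 1..n - l. \<Sum>s = 0..m - 1.
         (-1) ^ s * euler_poly l ((real s + x) / real m) * (1 / (real j powi (k - 1)))
         * (S1 (n - l) j / real (n - l))))"
proof -
  have "Suc (n - 1) = n"
    using assms(1) by simp
  then have "poly_euler k (n - 1) x =
      (\<Sum>l = 0..n - 1. real (n - 1 choose l) * (Ei_ln_coeff k (n - l) / real (n - l)) * euler_poly l x)"
    unfolding poly_euler_conv_sum by (simp add: Suc_diff_le)
  also have "\<dots> = (\<Sum>l = 0..n - 1. real (n - 1 choose l) * real m ^ l *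
      ((\<Sum>s = 0..m - 1. (-1) ^ s * euler_poly l ((real s + x) / real m)) * (Ei_ln_coeff k (n - l) / real (n - l))))"
    unfolding euler_poly_multiplication[OF assms(2), of _ x] by (simp only: mult_ac)
  also have "\<dots> = (\<Sum>l = 0..n - 1. real (n - 1 choose l) * real m ^ l *
      (\<Sum>j = 1..n - l. \<Sum>s = 0..m - 1.
         (-1) ^ s * euler_poly l ((real s + x) / real m) * (1 / (real j powi (k - 1)))
         * (S1 (n - l) j / real (n - l))))"
    unfolding Ei_ln_coeff_def sum_divide_distrib sum_distrib_left sum_distrib_right
    by (intro sum.cong refl) simp
  finally show ?thesis .
qed

end
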